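(* Let $m\ge 2$. Let $H_3$ be the graph with vertices $v_1,\dots,v_7$ whose edges are those of the $7$-cycle $v_1v_2\cdots v_7v_1$ together with $v_2v_5,v_3v_6,v_4v_7$ (it has exactly one vertex of degree $2$, namely $v_1$), and let $H_2$ be the graph with vertices $v_1,\dots,v_6$ and edges $v_1v_2,v_2v_3,v_3v_4,v_4v_5,v_5v_6,v_6v_1,v_2v_5,v_3v_6$ (it has exactly two vertices of degree $2$, namely $v_1,v_4$). Let $G$ be the cubic graph constructed from the path $P_m$ by replacing each leaf with a copy of $H_3$ and each internal vertex with a copy of $H_2$, where each edge $uv$ of $P_m$ is replaced by an edge joining a degree-$2$ vertex of the copy for $u$ to a degree-$2$ vertex of the copy for $v$, each degree-$2$ vertex being used exactly once. Then (a) $G$ is a bridged, Class $2$, triangle-free cubic graph, and (b) $c_2(G)-\left\lceil\frac{|V(G)|+2}{4}\right\rceil=\left\lfloor\frac{m}{2}\right\rfloor-1$.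
   Context: A graph is bridged if it has a bridge. A graph of maximum degree $\Delta$ is Class $1$ if its chromatic index is $\Delta$ and Class $2$ if it is $\Delta+1$. For a graph $G=(V,E)$ and $S_0\subseteq V$, the irreversible $2$-threshold conversion process sets, for $t=1,2,\dots$, $S_t=S_{t-1}\cup\{v: v \text{ has at least } 2 \text{ neighbours in } S_{t-1}\}$; $S_0$ is a $2$-conversion set if $S_t=V$ for some $t$, and $c_2(G)$ is the minimum size of a $2$-conversion set. *)

theory Defs
  imports Complex_Main
begin

definition adj :: "'a set set \<Rightarrow> 'a \<Rightarrow> 'a \<Rightarrow> bool" where
  "adj E u v \<longleftrightarrow> {u, v} \<in> E"

definition simple_graph :: "'a set \<Rightarrow> 'a set set \<Rightarrow> bool" where
  "simple_graph V E \<longleftrightarrow> finite V \<and>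
     (\<forall>e\<in>E. \<exists>u v. e = {u, v} \<and> u \<noteq> v \<and> u \<in> V \<and> v \<in> V)"

definition degree :: "'a set \<Rightarrow> 'a set set \<Rightarrow> 'a \<Rightarrow> nat" where
  "degree V E v = card {u\<in>V. adj E u v}"

definition max_degree :: "'a set \<Rightarrow> 'a set set \<Rightarrow> nat" where
  "max_degree V E = Max (degree V E ` V)"

definition cubic :: "'a set \<Rightarrow> 'a set set \<Rightarrow> bool" where
  "cubic V E \<longleftrightarrow> (\<forall>v\<in>V. degree V E v = 3)"

definition triangle_free :: "'a set set \<Rightarrow> bool" where
  "triangle_free E \<longleftrightarrow> \<not> (\<exists>u v w. adj E u v \<and> adj E v w \<and> adj E u w)"

text \<open>A bridge is an edge whose removal disconnects its two endpoints
  (equivalently, increases the number of connected components).\<close>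
definition is_bridge :: "'a set set \<Rightarrow> 'a set \<Rightarrow> bool" where
  "is_bridge E e \<longleftrightarrow> e \<in> E \<and>
     (\<exists>u v. e = {u, v} \<and> \<not> (adj (E - {e}))\<^sup>*\<^sup>* u v)"

definition bridged :: "'a set set \<Rightarrow> bool" where
  "bridged E \<longleftrightarrow> (\<exists>e. is_bridge E e)"

definition proper_edge_colouring :: "'a set set \<Rightarrow> nat \<Rightarrow> ('a set \<Rightarrow> nat) \<Rightarrow> bool" where
  "proper_edge_colouring E k f \<longleftrightarrow> (\<forall>e\<in>E. f e < k) \<and>
     (\<forall>e1\<in>E. \<forall>e2\<in>E. e1 \<noteq> e2 \<and> e1 \<inter> e2 \<noteq> {} \<longrightarrow> f e1 \<noteq> f e2)"

definition chromatic_index :: "'a set set \<Rightarrow> nat" where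
  "chromatic_index E = (LEAST k. \<exists>f. proper_edge_colouring E k f)"

definition class1 :: "'a set \<Rightarrow> 'a set set \<Rightarrow> bool" where
  "class1 V E \<longleftrightarrow> chromatic_index E = max_degree V E"

definition class2 :: "'a set \<Rightarrow> 'a set set \<Rightarrow> bool" where
  "class2 V E \<longleftrightarrow> chromatic_index E = max_degree V E + 1"

definition conv_step :: "'a set \<Rightarrow> 'a set set \<Rightarrow> 'a set \<Rightarrow> 'a set" where
  "conv_step V E S = S \<union> {v\<in>V. 2 \<le> card {u\<in>S. adj E u v}}"

definition conv_seq :: "'a set \<Rightarrow> 'a set set \<Rightarrow> 'a set \<Rightarrow> nat \<Rightarrow> 'a set" where
  "conv_seq V E S0 t = (conv_step V E ^^ t) S0"

definition is_2_conversion_set :: "'a set \<Rightarrow> 'a set set \<Rightarrow> 'a set \<Rightarrow> bool" where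
  "is_2_conversion_set V E S0 \<longleftrightarrow> S0 \<subseteq> V \<and> (\<exists>t. conv_seq V E S0 t = V)"

definition c2 :: "'a set \<Rightarrow> 'a set set \<Rightarrow> nat" where
  "c2 V E = (LEAST n. \<exists>S. is_2_conversion_set V E S \<and> card S = n)"

text \<open>Copy i (0 \<le> i < m) replaces the i-th vertex of P_m. Leaves (i = 0, i = m-1)
  are copies of H3 on local vertices 1..7; internal vertices are copies of H2 on
  local vertices 1..6.\<close>

definition copy_size :: "nat \<Rightarrow> nat \<Rightarrow> nat" where
  "copy_size m i = (if i = 0 \<or> i = m - 1 then 7 else 6)"

text \<open>local_edges 7 = edges of H3, local_edges 6 = edges of H2.\<close>
definition local_edges :: "nat \<Rightarrow> nat set set" where
  "local_edges n = {{j, j mod n + 1} | j. 1 \<le> j \<and> j \<le> n} \<union>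
     (if n = 7 then {{2,5},{3,6},{4,7}} else {{2,5},{3,6}})"

text \<open>Degree-2 vertex of copy i used for the edge to copy i+1: v1 if copy i is the
  leaf 0 (H3), otherwise v4 (H2). The edge to copy i-1 always uses v1.\<close>
definition next_port :: "nat \<Rightarrow> nat" where
  "next_port i = (if i = 0 then 1 else 4)"

definition GV :: "nat \<Rightarrow> (nat \<times> nat) set" where
  "GV m = {(i, j). i < m \<and> 1 \<le> j \<and> j \<le> copy_size m i}"

definition GE :: "nat \<Rightarrow> (nat \<times> nat) set set" where
  "GE m = {{(i, a), (i, b)} | i a b. i < m \<and> {a, b} \<in> local_edges (copy_size m i)}
        \<union> {{(i, next_port i), (Suc i, 1)} | i. Suc i < m}"

end

theory Submission
  imports Defs
begin

(* The single edge leaving the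
   first copy is a bridge; since that copy has 7 vertices, a colour class of a
   3-edge-colouring avoiding this edge would be a perfect matching of an odd set, so G is
   Class 2, while an explicit 4-edge-colouring exists.  For the conversion number, every
   copy contains four sets in which each vertex has at most one neighbour outside the set
   and which have no common vertex: such a set can never be entered by the process, so a
   2-conversion set meets all four and hence has at least two vertices in every copy.  Two
   seeds per copy do suffice, the process sweeping along the path, so c2(G) = 2m while
   |V(G)| = 6m + 2. *)

section \<open>Neighbourhoods, bridges and edge colourings\<close>

definition neighbours :: "'a set \<Rightarrow> 'a set set \<Rightarrow> 'a \<Rightarrow> 'a set" where
  "neighbours V E v = {u\<in>V. adj E u v}"

lemma degree_eq_card_neighbours: "degree V E v = card (neighbours V E v)"
  by (simp add: degree_def neighbours_def)

lemma adj_commute: "adj E u v \<longleftrightarrow> adj E v u"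
  by (simp add: adj_def insert_commute)

lemma max_degree_cubic:
  assumes "cubic V E" "V \<noteq> {}"
  shows "max_degree V E = 3"
proof -
  have "degree V E ` V = {3}"
    using assms unfolding cubic_def by auto
  then show ?thesis
    by (simp add: max_degree_def)
qed

lemma is_bridge_if_only_edge_leaving:
  assumes "{x, y} \<in> E" "x \<in> X" "y \<notin> X"
    and cut: "\<forall>e\<in>E - {{x, y}}. e \<subseteq> X \<or> e \<inter> X = {}"
  shows "is_bridge E {x, y}"
proof -
  have "z \<in> X" if "(adj (E - {{x, y}}))\<^sup>*\<^sup>* x z" for z
    using that
  proof (induction rule: rtranclp_induct)
    case base
    show ?case using \<open>x \<in> X\<close> .
  next
    case (step z w)
    then have "{z, w} \<in> E - {{x, y}}"
      by (simp add: adj_def)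
    then have "{z, w} \<subseteq> X \<or> {z, w} \<inter> X = {}"
      by (rule bspec[OF cut])
    then show ?case
      using step.IH by blast
  qed
  then have "\<not> (adj (E - {{x, y}}))\<^sup>*\<^sup>* x y"
    using \<open>y \<notin> X\<close> by blast
  then show ?thesis
    unfolding is_bridge_def using \<open>{x, y} \<in> E\<close> by blast
qed

lemma proper_edge_colouring_mono:
  "proper_edge_colouring E k f \<Longrightarrow> k \<le> l \<Longrightarrow> proper_edge_colouring E l f"
  by (auto simp: proper_edge_colouring_def)

lemma chromatic_index_eqI:
  assumes "proper_edge_colouring E k f" "\<And>g. \<not> proper_edge_colouring E (k - 1) g"
  shows "chromatic_index E = k"
  unfolding chromatic_index_def
proof (rule Least_equality)
  show "\<exists>f. proper_edge_colouring E k f"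
    using assms(1) by blast
next
  fix l
  assume "\<exists>g. proper_edge_colouring E l g"
  then obtain g where "proper_edge_colouring E l g" ..
  then show "k \<le> l"
    using assms(2)[of g] proper_edge_colouring_mono[of E l g "k - 1"] by linarith
qed

lemma edge_at_vertexE:
  assumes "simple_graph V E" "e \<in> E" "v \<in> e"
  obtains u where "e = {u, v}" "u \<noteq> v" "u \<in> neighbours V E v" "v \<in> V"
proof -
  obtain a b where "e = {a, b}" "a \<noteq> b" "a \<in> V" "b \<in> V"
    using assms(1,2) unfolding simple_graph_def by blast
  then show thesis
    using that assms(2,3) unfolding neighbours_def adj_def by (auto simp: insert_commute)
qed

lemma proper_edge_colouringI:
  assumes G: "simple_graph V E" and "\<forall>e\<in>E. f e < k"
    and inj: "\<forall>v\<in>V. inj_on (\<lambda>u. f {u, v}) (neighbours V E v)"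
  shows "proper_edge_colouring E k f"
  unfolding proper_edge_colouring_def
proof (intro conjI ballI impI)
  fix e1 e2
  assume e: "e1 \<in> E" "e2 \<in> E" "e1 \<noteq> e2 \<and> e1 \<inter> e2 \<noteq> {}"
  then obtain v where "v \<in> e1" "v \<in> e2"
    by blast
  with G e obtain u1 u2 where "e1 = {u1, v}" "e2 = {u2, v}" "v \<in> V"
    "u1 \<in> neighbours V E v" "u2 \<in> neighbours V E v"
    by (metis edge_at_vertexE)
  then show "f e1 \<noteq> f e2"
    using inj e(3) by (auto dest: inj_onD)
qed (use assms(2) in blast)

lemma colour_at_degree_3_vertex:
  assumes f: "proper_edge_colouring E 3 f" and "degree V E v = 3" "c < 3"
  obtains u where "adj E u v" "f {u, v} = c"
proof -
  let ?N = "neighbours V E v"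
  have "card ?N = 3"
    using assms(2) by (simp add: degree_eq_card_neighbours)
  have "inj_on (\<lambda>u. f {u, v}) ?N"
  proof (rule inj_onI)
    fix u w
    assume uw: "u \<in> ?N" "w \<in> ?N" "f {u, v} = f {w, v}"
    show "u = w"
    proof (rule ccontr)
      assume "u \<noteq> w"
      then have "{u, v} \<noteq> {w, v}" "{u, v} \<inter> {w, v} \<noteq> {}"
        by (auto simp: doubleton_eq_iff)
      moreover have "{u, v} \<in> E" "{w, v} \<in> E"
        using uw by (simp_all add: neighbours_def adj_def)
      ultimately have "f {u, v} \<noteq> f {w, v}"
        using f unfolding proper_edge_colouring_def by simp
      then show False
        using uw(3) by contradiction
    qed
  qed
  then have "card ((\<lambda>u. f {u, v}) ` ?N) = card {..<3::nat}"
    by (simp add: card_image \<open>card ?N = 3\<close>)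
  moreover have "(\<lambda>u. f {u, v}) ` ?N \<subseteq> {..<3}"
  proof (rule image_subsetI)
    fix u
    assume "u \<in> ?N"
    then have "{u, v} \<in> E"
      by (simp add: neighbours_def adj_def)
    then show "f {u, v} \<in> {..<3}"
      using f by (simp add: proper_edge_colouring_def)
  qed
  ultimately have "(\<lambda>u. f {u, v}) ` ?N = {..<3}"
    by (simp add: card_subset_eq)
  then have "c \<in> (\<lambda>u. f {u, v}) ` ?N"
    using \<open>c < 3\<close> by simp
  then obtain u where "u \<in> ?N" "c = f {u, v}"
    by (rule imageE)
  then show thesis
    by (intro that) (simp_all add: neighbours_def)
qed

text \<open>A colour class missing the only edge that leaves \<open>X\<close> would be a perfect
  matching of \<open>X\<close>.\<close>
lemma odd_cut_not_3_edge_colourable: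
  assumes G: "simple_graph V E" and "odd (card X)"
    and deg: "\<forall>v\<in>X. degree V E v = 3"
    and cut: "\<forall>e\<in>E - {b}. e \<subseteq> X \<or> e \<inter> X = {}"
  shows "\<not> proper_edge_colouring E 3 f"
proof
  assume f: "proper_edge_colouring E 3 f"
  define c :: nat where "c = (if f b = 0 then 1 else 0)"
  have "c < 3" "c \<noteq> f b"
    by (simp_all add: c_def)
  define M where "M = {e\<in>E. f e = c \<and> e \<subseteq> X}"
  have "X \<subseteq> \<Union>M"
  proof
    fix v
    assume "v \<in> X"
    then obtain u where u: "adj E u v" "f {u, v} = c"
      using colour_at_degree_3_vertex[OF f _ \<open>c < 3\<close>] deg by blast
    then have "{u, v} \<in> E - {b}"
      using \<open>c \<noteq> f b\<close> by (auto simp: adj_def)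
    then have "{u, v} \<subseteq> X \<or> {u, v} \<inter> X = {}"
      by (rule bspec[OF cut])
    then have "{u, v} \<subseteq> X"
      using \<open>v \<in> X\<close> by blast
    then show "v \<in> \<Union>M"
      using u by (auto simp: M_def adj_def)
  qed
  then have "X = \<Union>M"
    by (auto simp: M_def)
  have "pairwise disjnt M"
    using f by (auto simp: M_def pairwise_def disjnt_def proper_edge_colouring_def)
  have two: "card e = 2" if "e \<in> M" for e
    using G that by (auto simp: M_def simple_graph_def)
  then have "finite e" if "e \<in> M" for e
    using that by (metis card.infinite zero_neq_numeral)
  then have "card X = (\<Sum>e\<in>M. card e)"
    using \<open>X = \<Union>M\<close> card_Union_disjoint[OF \<open>pairwise disjnt M\<close>] by simp
  also have "\<dots> = 2 * card M"
    using two by simp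
  finally have "card X = 2 * card M" .
  then show False
    using \<open>odd (card X)\<close> by simp
qed

section \<open>Irreversible 2-threshold conversion\<close>

lemma conv_seq_Suc: "conv_seq V E S (Suc t) = conv_step V E (conv_seq V E S t)"
  by (simp add: conv_seq_def)

lemma conv_seq_subset: "S \<subseteq> V \<Longrightarrow> conv_seq V E S t \<subseteq> V"
  by (induction t) (auto simp: conv_seq_def conv_step_def)

lemma conv_seq_subset_Suc: "conv_seq V E S t \<subseteq> conv_seq V E S (Suc t)"
  by (simp add: conv_seq_Suc conv_step_def)

lemma subset_conv_seq: "S \<subseteq> conv_seq V E S t"
  by (induction t) (auto simp: conv_seq_def conv_step_def)

definition conv_closed :: "'a set \<Rightarrow> 'a set set \<Rightarrow> 'a set \<Rightarrow> bool" where
  "conv_closed V E R \<longleftrightarrow> (\<forall>v\<in>V. 2 \<le> card {u\<in>R. adj E u v} \<longrightarrow> v \<in> R)"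

lemma conv_closed_two_neighbours:
  assumes "conv_closed V E R" "finite R" "v \<in> V"
    and "a \<in> R" "b \<in> R" "a \<noteq> b" "adj E a v" "adj E b v"
  shows "v \<in> R"
proof -
  have "card {a, b} \<le> card {u\<in>R. adj E u v}"
    using assms(2,4-8) by (intro card_mono) auto
  then show ?thesis
    using assms(1,3,6) by (simp add: conv_closed_def)
qed

text \<open>The process stabilises after finitely many steps, at a closed set.\<close>
lemma is_2_conversion_setI:
  assumes "finite V" "S \<subseteq> V"
    and closed_full: "\<And>R. S \<subseteq> R \<Longrightarrow> R \<subseteq> V \<Longrightarrow> conv_closed V E R \<Longrightarrow> V \<subseteq> R"
  shows "is_2_conversion_set V E S"
proof -
  let ?A = "conv_seq V E S"
  have fin: "finite (?A t)" for t
    using conv_seq_subset[OF \<open>S \<subseteq> V\<close>] \<open>finite V\<close> by (rule finite_subset)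
  have "\<exists>t. ?A (Suc t) = ?A t"
  proof (rule ccontr)
    assume "\<nexists>t. ?A (Suc t) = ?A t"
    then have "card (?A t) < card (?A (Suc t))" for t
      using conv_seq_subset_Suc fin by (metis psubsetI psubset_card_mono)
    then have "strict_mono (card \<circ> ?A)"
      by (simp add: strict_mono_Suc_iff)
    then have "Suc (card V) \<le> card (?A (Suc (card V)))"
      using strict_mono_imp_increasing by force
    moreover have "card (?A (Suc (card V))) \<le> card V"
      using conv_seq_subset[OF \<open>S \<subseteq> V\<close>] \<open>finite V\<close> by (rule card_mono[rotated])
    ultimately show False
      by simp
  qed
  then obtain t where t: "?A (Suc t) = ?A t" ..
  have "conv_closed V E (?A t)"
    using t by (auto simp: conv_closed_def conv_seq_Suc conv_step_def)
  then have "?A t = V"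
    using closed_full[OF subset_conv_seq conv_seq_subset[OF \<open>S \<subseteq> V\<close>]]
      conv_seq_subset[OF \<open>S \<subseteq> V\<close>] by blast
  then show ?thesis
    using \<open>S \<subseteq> V\<close> by (auto simp: is_2_conversion_set_def)
qed

definition immune :: "'a set \<Rightarrow> 'a set set \<Rightarrow> 'a set \<Rightarrow> bool" where
  "immune V E Z \<longleftrightarrow> (\<forall>v\<in>Z. card (neighbours V E v - Z) \<le> 1)"

lemma conv_seq_disjoint_immune:
  assumes "finite V" "S \<subseteq> V" "immune V E Z" "Z \<inter> S = {}"
  shows "conv_seq V E S t \<inter> Z = {}"
proof (induction t)
  case 0
  then show ?case
    using assms(4) by (auto simp: conv_seq_def)
next
  case (Suc t)
  let ?A = "conv_seq V E S t"
  have "card {u\<in>?A. adj E u v} \<le> 1" if "v \<in> Z" for v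
  proof -
    have "{u\<in>?A. adj E u v} \<subseteq> neighbours V E v - Z"
      using Suc conv_seq_subset[OF assms(2)] by (auto simp: neighbours_def)
    then have "card {u\<in>?A. adj E u v} \<le> card (neighbours V E v - Z)"
      using assms(1) by (intro card_mono) (auto simp: neighbours_def)
    then show ?thesis
      using assms(3) that by (auto simp: immune_def)
  qed
  then show ?case
    using Suc by (fastforce simp: conv_seq_Suc conv_step_def)
qed

lemma is_2_conversion_set_meets_immune:
  assumes "is_2_conversion_set V E S" "finite V" "immune V E Z" "Z \<subseteq> V" "Z \<noteq> {}"
  shows "Z \<inter> S \<noteq> {}"
proof
  assume "Z \<inter> S = {}"
  obtain t where "S \<subseteq> V" "conv_seq V E S t = V"
    using assms(1) by (auto simp: is_2_conversion_set_def)
  then show False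
    using conv_seq_disjoint_immune[OF assms(2) \<open>S \<subseteq> V\<close> assms(3) \<open>Z \<inter> S = {}\<close>, of t] assms(4,5)
    by blast
qed

lemma two_le_card_if_meets_all:
  assumes "finite A" "\<Z> \<noteq> {}" "\<forall>Z\<in>\<Z>. Z \<inter> A \<noteq> {}" "\<Inter>\<Z> = {}"
  shows "2 \<le> card A"
proof (rule ccontr)
  assume "\<not> 2 \<le> card A"
  then have "card A \<le> 1"
    by simp
  moreover obtain Z where "Z \<in> \<Z>"
    using assms(2) by blast
  then obtain a where "a \<in> A"
    using assms(3) by blast
  ultimately have "A = {a}"
    using assms(1) by (metis card_le_Suc0_iff_eq One_nat_def singleton_iff subsetI subset_antisym)
  then have "a \<in> \<Inter>\<Z>"
    using assms(3) by blast
  then show False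
    using assms(4) by blast
qed

lemma cycle_edges_eq_image:
  "{{j, j mod n + 1} | j. 1 \<le> j \<and> j \<le> n} = (\<lambda>j. {j, j mod n + 1}) ` {1..n}"
  by auto

lemma local_edges_H3:
  "local_edges 7 = {{1, 2}, {2, 3}, {3, 4}, {4, 5}, {5, 6}, {6, 7}, {7, 1}, {2, 5}, {3, 6}, {4, 7}}"
proof -
  have "{1..7::nat} = {1, 2, 3, 4, 5, 6, 7}"
    by auto
  then show ?thesis
    unfolding local_edges_def cycle_edges_eq_image by (simp add: insert_commute flip: numeral_2_eq_2)
qed

lemma local_edges_H2:
  "local_edges 6 = {{1, 2}, {2, 3}, {3, 4}, {4, 5}, {5, 6}, {6, 1}, {2, 5}, {3, 6}}"
proof -
  have "{1..6::nat} = {1, 2, 3, 4, 5, 6}"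
    by auto
  then show ?thesis
    unfolding local_edges_def cycle_edges_eq_image by (simp add: insert_commute flip: numeral_2_eq_2)
qed

lemma local_edge_range:
  assumes "{a, b} \<in> local_edges (copy_size m i)"
  shows "a \<noteq> b" "a \<in> {1..copy_size m i}" "b \<in> {1..copy_size m i}"
  using assms
  by (auto simp: copy_size_def local_edges_H3 local_edges_H2 doubleton_eq_iff split: if_splits)

lemma adj_GE_iff:
  "adj (GE m) (i, a) (k, b) \<longleftrightarrow>
     i = k \<and> i < m \<and> {a, b} \<in> local_edges (copy_size m i)
   \<or> k = Suc i \<and> Suc i < m \<and> a = next_port i \<and> b = 1
   \<or> i = Suc k \<and> Suc k < m \<and> a = 1 \<and> b = next_port k"
  unfolding adj_def GE_def by (auto simp: doubleton_eq_iff insert_commute)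

lemma adj_GE_endpoints:
  assumes "adj (GE m) u v"
  shows "u \<in> GV m" "v \<in> GV m" "u \<noteq> v"
proof -
  obtain i a k b where uv: "u = (i, a)" "v = (k, b)"
    by (cases u, cases v)
  from assms consider
      (inside) "i = k" "i < m" "{a, b} \<in> local_edges (copy_size m i)"
    | (to_next) "k = Suc i" "Suc i < m" "a = next_port i" "b = 1"
    | (to_prev) "i = Suc k" "Suc k < m" "a = 1" "b = next_port k"
    unfolding uv adj_GE_iff by blast
  then have "u \<in> GV m \<and> v \<in> GV m \<and> u \<noteq> v"
  proof cases
    case inside
    then show ?thesis
      using local_edge_range[of a b m i] by (simp add: uv GV_def)
  qed (simp_all add: uv GV_def next_port_def copy_size_def)
  then show "u \<in> GV m" "v \<in> GV m" "u \<noteq> v"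
    by simp_all
qed

lemma finite_GV: "finite (GV m)"
  by (rule finite_subset[of _ "{..<m} \<times> {..7}"]) (auto simp: GV_def copy_size_def split: if_splits)

lemma simple_graph_G: "simple_graph (GV m) (GE m)"
  unfolding simple_graph_def
proof (intro conjI ballI)
  show "finite (GV m)"
    by (rule finite_GV)
next
  fix e
  assume "e \<in> GE m"
  moreover from this obtain u v where "e = {u, v}"
    unfolding GE_def by blast
  ultimately have "adj (GE m) u v"
    by (simp add: adj_def)
  then have "e = {u, v} \<and> u \<noteq> v \<and> u \<in> GV m \<and> v \<in> GV m"
    using \<open>e = {u, v}\<close> by (simp add: adj_GE_endpoints)
  then show "\<exists>u v. e = {u, v} \<and> u \<noteq> v \<and> u \<in> GV m \<and> v \<in> GV m"
    by blast
qed

lemma copy_size_first [simp]: "copy_size m 0 = 7"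
  and copy_size_last [simp]: "copy_size m (m - 1) = 7"
  and copy_size_inner: "0 < i \<Longrightarrow> i < m - 1 \<Longrightarrow> copy_size m i = 6"
  by (simp_all add: copy_size_def)

lemma GV_cases [consumes 1, case_names first last inner]:
  assumes "(i, j) \<in> GV m" "2 \<le> m"
  obtains (first) "i = 0" "j \<in> {1, 2, 3, 4, 5, 6, 7}"
    | (last) "i = m - 1" "j \<in> {1, 2, 3, 4, 5, 6, 7}"
    | (inner) "0 < i" "i < m - 1" "j \<in> {1, 2, 3, 4, 5, 6}"
proof -
  have j: "j \<in> {1..copy_size m i}" and "i < m"
    using assms(1) by (auto simp: GV_def)
  have labels: "{1..7::nat} = {1, 2, 3, 4, 5, 6, 7}" "{1..6::nat} = {1, 2, 3, 4, 5, 6}"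
    by auto
  consider "i = 0" | "i = m - 1" | "0 < i" "i < m - 1"
    using \<open>i < m\<close> by linarith
  then show thesis
  proof cases
    case 1
    with j have "j \<in> {1..7}"
      by (simp add: copy_size_def)
    with 1 show thesis
      unfolding labels by (rule first)
  next
    case 2
    with j have "j \<in> {1..7}"
      by (simp add: copy_size_def)
    with 2 show thesis
      unfolding labels by (rule last)
  next
    case 3
    with j have "j \<in> {1..6}"
      by (simp add: copy_size_inner)
    with 3 show thesis
      unfolding labels by (rule inner)
  qed
qed

text \<open>The tables below are applied by the simplifier after a case split with
  GV_cases; this needs \<open>simp del: One_nat_def\<close>, as otherwise the
  label \<open>1\<close> is rewritten to \<open>Suc 0\<close> and the tables no longer match.\<close>

lemma neighbours_first_copy:
  assumes "2 \<le> m"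
  shows "neighbours (GV m) (GE m) (0, 1) = {(0, 2), (0, 7), (1, 1)}"
    and "neighbours (GV m) (GE m) (0, 2) = {(0, 1), (0, 3), (0, 5)}"
    and "neighbours (GV m) (GE m) (0, 3) = {(0, 2), (0, 4), (0, 6)}"
    and "neighbours (GV m) (GE m) (0, 4) = {(0, 3), (0, 5), (0, 7)}"
    and "neighbours (GV m) (GE m) (0, 5) = {(0, 2), (0, 4), (0, 6)}"
    and "neighbours (GV m) (GE m) (0, 6) = {(0, 3), (0, 5), (0, 7)}"
    and "neighbours (GV m) (GE m) (0, 7) = {(0, 1), (0, 4), (0, 6)}"
  using assms
  by (auto simp: neighbours_def GV_def adj_GE_iff local_edges_H3 doubleton_eq_iff
      next_port_def copy_size_def)

lemma neighbours_last_copy: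
  assumes "2 \<le> m"
  shows "neighbours (GV m) (GE m) (m - 1, 1) = {(m - 1, 2), (m - 1, 7), (m - 2, next_port (m - 2))}"
    and "neighbours (GV m) (GE m) (m - 1, 2) = {(m - 1, 1), (m - 1, 3), (m - 1, 5)}"
    and "neighbours (GV m) (GE m) (m - 1, 3) = {(m - 1, 2), (m - 1, 4), (m - 1, 6)}"
    and "neighbours (GV m) (GE m) (m - 1, 4) = {(m - 1, 3), (m - 1, 5), (m - 1, 7)}"
    and "neighbours (GV m) (GE m) (m - 1, 5) = {(m - 1, 2), (m - 1, 4), (m - 1, 6)}"
    and "neighbours (GV m) (GE m) (m - 1, 6) = {(m - 1, 3), (m - 1, 5), (m - 1, 7)}"
    and "neighbours (GV m) (GE m) (m - 1, 7) = {(m - 1, 1), (m - 1, 4), (m - 1, 6)}"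
  using assms
  by (auto simp: neighbours_def GV_def adj_GE_iff local_edges_H3 doubleton_eq_iff
      next_port_def copy_size_def)

lemma neighbours_inner_copy:
  assumes "0 < i" "i < m - 1"
  shows "neighbours (GV m) (GE m) (i, 1) = {(i, 2), (i, 6), (i - 1, next_port (i - 1))}"
    and "neighbours (GV m) (GE m) (i, 2) = {(i, 1), (i, 3), (i, 5)}"
    and "neighbours (GV m) (GE m) (i, 3) = {(i, 2), (i, 4), (i, 6)}"
    and "neighbours (GV m) (GE m) (i, 4) = {(i, 3), (i, 5), (Suc i, 1)}"
    and "neighbours (GV m) (GE m) (i, 5) = {(i, 2), (i, 4), (i, 6)}"
    and "neighbours (GV m) (GE m) (i, 6) = {(i, 1), (i, 3), (i, 5)}"
  using assms
  by (auto simp: neighbours_def GV_def adj_GE_iff local_edges_H2 doubleton_eq_iff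
      next_port_def copy_size_def split: if_split_asm)

lemmas neighbours_G = neighbours_first_copy neighbours_last_copy neighbours_inner_copy

section \<open>Degrees, triangles and a 4-edge-colouring of G\<close>

lemma cubic_G:
  assumes "2 \<le> m"
  shows "cubic (GV m) (GE m)"
  unfolding cubic_def degree_eq_card_neighbours
proof
  fix v
  assume "v \<in> GV m"
  then obtain i j where v: "v = (i, j)" "(i, j) \<in> GV m"
    by (cases v) auto
  from v(2) assms show "card (neighbours (GV m) (GE m) v) = 3"
    by (cases rule: GV_cases) (auto simp: v(1) neighbours_G next_port_def simp del: One_nat_def)
qed

lemma neighbours_pairwise_non_adjacent:
  assumes "2 \<le> m" "v \<in> GV m" "u \<in> neighbours (GV m) (GE m) v" "w \<in> neighbours (GV m) (GE m) v"
    and "u \<noteq> w"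
  shows "u \<notin> neighbours (GV m) (GE m) w \<or> w \<notin> neighbours (GV m) (GE m) u"
proof -
  obtain i j where v: "v = (i, j)" "(i, j) \<in> GV m"
    using assms(2) by (cases v) auto
  have "m - 2 \<noteq> m - 1" "m - 1 \<noteq> m - 2"
    using assms(1) by arith+
  from v(2) assms(1) show ?thesis
    using assms(3-5) unfolding v(1)
    by (cases rule: GV_cases)
      (auto simp: neighbours_G \<open>m - 2 \<noteq> m - 1\<close> \<open>m - 1 \<noteq> m - 2\<close> simp del: One_nat_def)
qed

lemma triangle_free_G:
  assumes "2 \<le> m"
  shows "triangle_free (GE m)"
  unfolding triangle_free_def
proof clarify
  fix u v w
  assume uvw: "adj (GE m) u v" "adj (GE m) v w" "adj (GE m) u w"
  then have "u \<in> GV m" "v \<in> GV m" "w \<in> GV m" "u \<noteq> w"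
    by (simp_all add: adj_GE_endpoints)
  with uvw have "u \<in> neighbours (GV m) (GE m) v" "w \<in> neighbours (GV m) (GE m) v"
    "u \<in> neighbours (GV m) (GE m) w" "w \<in> neighbours (GV m) (GE m) u"
    by (simp_all add: neighbours_def adj_commute)
  then show False
    using neighbours_pairwise_non_adjacent[OF assms \<open>v \<in> GV m\<close> _ _ \<open>u \<noteq> w\<close>] by blast
qed

text \<open>Inside a copy the cycle edges alternate between colours 0 and 1 and the chords
  get colour 2; in \<open>H\<^sub>3\<close> the odd cycle forces colour 2 on \<open>v\<^sub>7v\<^sub>1\<close> and
  colour 3 on the chord \<open>v\<^sub>4v\<^sub>7\<close>.  Edges between copies get colour 3.\<close>
definition local_colour :: "nat set \<Rightarrow> nat" where
  "local_colour e =
     (if e \<in> {{1, 2}, {3, 4}, {5, 6}} then 0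
      else if e \<in> {{2, 3}, {4, 5}, {6, 7}, {6, 1}} then 1
      else if e = {4, 7} then 3
      else 2)"

definition edge_colour :: "(nat \<times> nat) set \<Rightarrow> nat" where
  "edge_colour e = (if card (fst ` e) = 1 then local_colour (snd ` e) else 3)"

lemma edge_colour_inj_on_neighbours:
  assumes "2 \<le> m" "v \<in> GV m"
  shows "inj_on (\<lambda>u. edge_colour {u, v}) (neighbours (GV m) (GE m) v)"
proof -
  obtain i j where v: "v = (i, j)" "(i, j) \<in> GV m"
    using assms(2) by (cases v) auto
  have "m - 2 \<noteq> m - 1"
    using assms(1) by arith
  from v(2) assms(1) show ?thesis
    unfolding v(1)
    by (cases rule: GV_cases)
      (auto simp: neighbours_G edge_colour_def local_colour_def doubleton_eq_iff next_port_def
        \<open>m - 2 \<noteq> m - 1\<close> simp del: One_nat_def)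
qed

lemma edge_colour_proper:
  assumes "2 \<le> m"
  shows "proper_edge_colouring (GE m) 4 edge_colour"
proof (rule proper_edge_colouringI[OF simple_graph_G])
  show "\<forall>e\<in>GE m. edge_colour e < 4"
    by (simp add: edge_colour_def local_colour_def)
  show "\<forall>v\<in>GV m. inj_on (\<lambda>u. edge_colour {u, v}) (neighbours (GV m) (GE m) v)"
    using edge_colour_inj_on_neighbours[OF assms] by blast
qed

definition copy_set :: "nat \<Rightarrow> nat \<Rightarrow> (nat \<times> nat) set" where
  "copy_set m i = {i} \<times> {1..copy_size m i}"

lemma GV_eq_UN_copy_set: "GV m = (\<Union>i<m. copy_set m i)"
  by (auto simp: GV_def copy_set_def)

lemma bridge_edge_in_GE: "2 \<le> m \<Longrightarrow> {(0, 1), (1, 1)} \<in> GE m"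
  using adj_GE_iff[of m 0 1 1 1] by (simp add: adj_def next_port_def)

lemma GE_inside_or_outside_first_copy:
  "\<forall>e\<in>GE m - {{(0, 1), (1, 1)}}. e \<subseteq> copy_set m 0 \<or> e \<inter> copy_set m 0 = {}"
proof
  fix e
  assume e: "e \<in> GE m - {{(0, 1), (1, 1)}}"
  then consider (inside) i a b where "e = {(i, a), (i, b)}" "{a, b} \<in> local_edges (copy_size m i)"
    | (between) i where "e = {(i, next_port i), (Suc i, 1)}"
    unfolding GE_def by blast
  then show "e \<subseteq> copy_set m 0 \<or> e \<inter> copy_set m 0 = {}"
  proof cases
    case inside
    then show ?thesis
      using local_edge_range[of a b m i] by (cases "i = 0") (auto simp: copy_set_def)
  next
    case between
    with e have "i \<noteq> 0"
      by (auto simp: next_port_def)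
    with between show ?thesis
      by (auto simp: copy_set_def)
  qed
qed

lemma bridged_G:
  assumes "2 \<le> m"
  shows "bridged (GE m)"
proof -
  have "is_bridge (GE m) {(0, 1), (1, 1)}"
    by (rule is_bridge_if_only_edge_leaving[OF bridge_edge_in_GE[OF assms] _ _
          GE_inside_or_outside_first_copy])
      (simp_all add: copy_set_def)
  then show ?thesis
    unfolding bridged_def by blast
qed

lemma class2_G:
  assumes "2 \<le> m"
  shows "class2 (GV m) (GE m)"
proof -
  have "\<not> proper_edge_colouring (GE m) 3 g" for g
  proof (rule odd_cut_not_3_edge_colourable[OF simple_graph_G _ _ GE_inside_or_outside_first_copy])
    show "odd (card (copy_set m 0))"
      by (simp add: copy_set_def)
    have "copy_set m 0 \<subseteq> GV m"
      using assms by (auto simp: copy_set_def GV_def)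
    then show "\<forall>v\<in>copy_set m 0. degree (GV m) (GE m) v = 3"
      using cubic_G[OF assms] unfolding cubic_def by blast
  qed
  then have "chromatic_index (GE m) = 4"
    using chromatic_index_eqI[OF edge_colour_proper[OF assms]] by simp
  moreover have "(0, 1) \<in> GV m"
    using assms by (simp add: GV_def)
  then have "max_degree (GV m) (GE m) = 3"
    using max_degree_cubic[OF cubic_G[OF assms]] by blast
  ultimately show ?thesis
    by (simp add: class2_def)
qed

section \<open>The 2-conversion number of G\<close>

definition immune_labels :: "nat \<Rightarrow> nat \<Rightarrow> nat set set" where
  "immune_labels m i =
     (if copy_size m i = 7 then {{2, 3, 5, 6}, {3, 4, 6, 7}, {1, 2, 3, 4, 7}, {4, 5, 6, 7}}
      else {{3, 4, 5, 6}, {1, 2, 5, 6}, {1, 2, 3, 6}, {2, 3, 4, 5}})"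

lemma immune_copy_part:
  assumes "2 \<le> m" "i < m" "Z \<in> immune_labels m i"
  shows "immune (GV m) (GE m) (Pair i ` Z)"
proof -
  have "m - 2 \<noteq> m - 1"
    using assms(1) by arith
  have single: "card ({x} - A) \<le> 1" for x :: "nat \<times> nat" and A
    by (simp add: insert_Diff_if)
  consider "i = 0" | "i = m - 1" | "0 < i" "i < m - 1"
    using assms(2) by linarith
  then show ?thesis
    using assms(3)
    by cases (auto simp: immune_labels_def immune_def neighbours_G copy_size_inner
        \<open>m - 2 \<noteq> m - 1\<close> single assms(1) simp del: One_nat_def)
qed

lemma two_le_card_conversion_set_copy:
  assumes S: "is_2_conversion_set (GV m) (GE m) S" and "2 \<le> m" "i < m"
  shows "2 \<le> card (S \<inter> copy_set m i)"
proof (rule two_le_card_if_meets_all)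
  show "finite (S \<inter> copy_set m i)"
    by (simp add: copy_set_def)
  show "(`) (Pair i) ` immune_labels m i \<noteq> {}"
    by (simp add: immune_labels_def)
  show "\<Inter>((`) (Pair i) ` immune_labels m i) = {}"
    by (auto simp: immune_labels_def)
  show "\<forall>Z\<in>(`) (Pair i) ` immune_labels m i. Z \<inter> (S \<inter> copy_set m i) \<noteq> {}"
  proof
    fix Z
    assume "Z \<in> (`) (Pair i) ` immune_labels m i"
    then obtain L where Z: "Z = Pair i ` L" "L \<in> immune_labels m i"
      by blast
    then have "L \<noteq> {}" "L \<subseteq> {1..copy_size m i}"
      by (auto simp: immune_labels_def copy_size_def split: if_splits)
    then have "Z \<noteq> {}" "Z \<subseteq> copy_set m i"
      using Z(1) by (auto simp: copy_set_def)
    moreover have "Z \<subseteq> GV m"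
      using \<open>Z \<subseteq> copy_set m i\<close> \<open>i < m\<close> by (auto simp: copy_set_def GV_def)
    ultimately show "Z \<inter> (S \<inter> copy_set m i) \<noteq> {}"
      using is_2_conversion_set_meets_immune[OF S finite_GV immune_copy_part[OF assms(2,3) Z(2)]]
      unfolding Z(1)[symmetric] by blast
  qed
qed

lemma card_conversion_set_lower:
  assumes S: "is_2_conversion_set (GV m) (GE m) S" and "2 \<le> m"
  shows "2 * m \<le> card S"
proof -
  have "S = (\<Union>i<m. S \<inter> copy_set m i)"
    using S unfolding is_2_conversion_set_def GV_eq_UN_copy_set by blast
  then have "card S = card (\<Union>i<m. S \<inter> copy_set m i)"
    by (rule arg_cong)
  also have "\<dots> = (\<Sum>i<m. card (S \<inter> copy_set m i))"
    by (rule card_UN_disjoint) (auto simp: copy_set_def)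
  also have "\<dots> \<ge> (\<Sum>i<m. 2)"
    using two_le_card_conversion_set_copy[OF assms] by (intro sum_mono) simp
  finally show ?thesis
    by simp
qed

text \<open>Two seeds per copy: \<open>v\<^sub>2, v\<^sub>6\<close> convert a copy of \<open>H\<^sub>3\<close> on their own,
  and \<open>v\<^sub>2, v\<^sub>5\<close> convert a copy of \<open>H\<^sub>2\<close> once the neighbour of \<open>v\<^sub>1\<close> in the
  previous copy is converted.\<close>
definition seed :: "nat \<Rightarrow> (nat \<times> nat) set" where
  "seed m = (SIGMA i:{..<m}. {2, if copy_size m i = 7 then 6 else 5})"

lemma card_seed: "card (seed m) = 2 * m"
proof -
  have "card (seed m) = (\<Sum>i<m. card {2::nat, if copy_size m i = 7 then 6 else 5})"
    unfolding seed_def by (rule card_SigmaI) auto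
  also have "\<dots> = (\<Sum>i<m. 2)"
    by (intro sum.cong) auto
  finally show ?thesis
    by simp
qed

lemma seed_subset_GV: "seed m \<subseteq> GV m"
  by (auto simp: seed_def GV_def copy_size_def)

lemma conv_closed_copy_vertex:
  assumes R: "conv_closed (GV m) (GE m) R" "R \<subseteq> GV m" and "i < m"
    and "(i, a) \<in> R" "(i, b) \<in> R" "a \<noteq> b"
    and "{a, c} \<in> local_edges (copy_size m i)" "{b, c} \<in> local_edges (copy_size m i)"
  shows "(i, c) \<in> R"
  using conv_closed_two_neighbours[OF R(1) finite_subset[OF R(2) finite_GV], of "(i, c)" "(i, a)" "(i, b)"]
    assms(3-) local_edge_range[of c a m i]
  by (simp add: adj_GE_iff GV_def insert_commute)

lemma leaf_copy_converted:
  assumes R: "conv_closed (GV m) (GE m) R" "R \<subseteq> GV m"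
    and i: "i < m" "copy_size m i = 7" and "(i, 2) \<in> R" "(i, 6) \<in> R"
  shows "copy_set m i \<subseteq> R"
proof -
  note step = conv_closed_copy_vertex[OF R i(1)]
  note H3 = i(2) local_edges_H3 doubleton_eq_iff
  have "(i, 3) \<in> R"
    using \<open>(i, 2) \<in> R\<close> \<open>(i, 6) \<in> R\<close> by (rule step) (simp_all add: H3)
  moreover have "(i, 5) \<in> R"
    using \<open>(i, 2) \<in> R\<close> \<open>(i, 6) \<in> R\<close> by (rule step) (simp_all add: H3)
  ultimately have "(i, 4) \<in> R"
    by (rule step) (simp_all add: H3)
  with \<open>(i, 6) \<in> R\<close> have "(i, 7) \<in> R"
    by (rule step) (simp_all add: H3)
  with \<open>(i, 2) \<in> R\<close> have "(i, 1) \<in> R"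
    by (rule step) (simp_all add: H3)
  have "{1..7::nat} = {1, 2, 3, 4, 5, 6, 7}"
    by auto
  then show ?thesis
    using \<open>(i, 1) \<in> R\<close> \<open>(i, 2) \<in> R\<close> \<open>(i, 3) \<in> R\<close> \<open>(i, 4) \<in> R\<close> \<open>(i, 5) \<in> R\<close>
      \<open>(i, 6) \<in> R\<close> \<open>(i, 7) \<in> R\<close> i(2)
    by (auto simp: copy_set_def simp del: One_nat_def)
qed

lemma inner_copy_converted:
  assumes R: "conv_closed (GV m) (GE m) R" "R \<subseteq> GV m"
    and i: "0 < i" "i < m" "copy_size m i = 6"
    and "(i, 2) \<in> R" "(i, 5) \<in> R" and port: "(i - 1, next_port (i - 1)) \<in> R"
  shows "copy_set m i \<subseteq> R"
proof -
  note step = conv_closed_copy_vertex[OF R i(2)]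
  note H2 = i(3) local_edges_H2 doubleton_eq_iff
  have "i - 1 \<noteq> i"
    using i(1) by simp
  then have "(i, 1) \<in> R"
    using conv_closed_two_neighbours[OF R(1) finite_subset[OF R(2) finite_GV],
        of "(i, 1)" "(i, 2)" "(i - 1, next_port (i - 1))"] \<open>(i, 2) \<in> R\<close> port i
    by (simp add: GV_def adj_GE_iff H2)
  with \<open>(i, 5) \<in> R\<close> have "(i, 6) \<in> R"
    by (rule step) (simp_all add: H2)
  with \<open>(i, 2) \<in> R\<close> have "(i, 3) \<in> R"
    by (rule step) (simp_all add: H2)
  with \<open>(i, 5) \<in> R\<close> have "(i, 4) \<in> R"
    by (rule step) (simp_all add: H2)
  have "{1..6::nat} = {1, 2, 3, 4, 5, 6}"
    by auto
  then show ?thesis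
    using \<open>(i, 1) \<in> R\<close> \<open>(i, 2) \<in> R\<close> \<open>(i, 3) \<in> R\<close> \<open>(i, 4) \<in> R\<close> \<open>(i, 5) \<in> R\<close>
      \<open>(i, 6) \<in> R\<close> i(3)
    by (auto simp: copy_set_def simp del: One_nat_def)
qed

lemma seed_is_2_conversion_set:
  assumes "2 \<le> m"
  shows "is_2_conversion_set (GV m) (GE m) (seed m)"
proof (rule is_2_conversion_setI[OF finite_GV seed_subset_GV])
  fix R
  assume R: "seed m \<subseteq> R" "R \<subseteq> GV m" "conv_closed (GV m) (GE m) R"
  have "copy_set m i \<subseteq> R" if "i < m" for i
    using that
  proof (induction i)
    case 0
    then show ?case
      using R by (intro leaf_copy_converted) (auto simp: seed_def copy_size_def)
  next
    case (Suc i)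
    show ?case
    proof (cases "Suc i = m - 1")
      case True
      then show ?thesis
        using R Suc.prems by (intro leaf_copy_converted) (auto simp: seed_def copy_size_def)
    next
      case False
      then have "copy_size m (Suc i) = 6"
        using Suc.prems by (simp add: copy_size_def)
      moreover have "(i, next_port i) \<in> R"
        using Suc by (auto simp: copy_set_def next_port_def copy_size_def)
      ultimately show ?thesis
        using R Suc.prems by (intro inner_copy_converted) (auto simp: seed_def)
    qed
  qed
  then show "GV m \<subseteq> R"
    by (auto simp: GV_eq_UN_copy_set)
qed

lemma c2_G:
  assumes "2 \<le> m"
  shows "c2 (GV m) (GE m) = 2 * m"
  unfolding c2_def
proof (rule Least_equality)
  show "\<exists>S. is_2_conversion_set (GV m) (GE m) S \<and> card S = 2 * m"
    using seed_is_2_conversion_set[OF assms] card_seed by blast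
next
  fix n
  assume "\<exists>S. is_2_conversion_set (GV m) (GE m) S \<and> card S = n"
  then show "2 * m \<le> n"
    using card_conversion_set_lower[OF _ assms] by blast
qed

lemma card_GV:
  assumes "2 \<le> m"
  shows "card (GV m) = 6 * m + 2"
proof -
  have "card (GV m) = (\<Sum>i<m. card (copy_set m i))"
    unfolding GV_eq_UN_copy_set by (rule card_UN_disjoint) (auto simp: copy_set_def)
  also have "\<dots> = (\<Sum>i<m. 6 + of_bool (i \<in> {0, m - 1}))"
    by (intro sum.cong) (auto simp: copy_set_def copy_size_def)
  also have "\<dots> = 6 * m + card ({..<m} \<inter> {i. i \<in> {0, m - 1}})"
    by (simp only: sum.distrib) (subst sum_of_bool_eq; simp)
  also have "{..<m} \<inter> {i. i \<in> {0, m - 1}} = {0, m - 1}"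
    using assms by auto
  finally show ?thesis
    using assms by simp
qed

lemma ceiling_excess:
  "int (2 * m) - \<lceil>real (6 * m + 2 + 2) / 4\<rceil> = int (m div 2) - 1"
proof (cases "even m")
  case True
  then obtain k where k: "m = 2 * k" ..
  have "\<lceil>real (6 * m + 2 + 2) / 4\<rceil> = int (3 * k + 1)"
    by (rule ceiling_unique) (simp_all add: k field_simps)
  then show ?thesis
    using k by simp
next
  case False
  then obtain k where k: "m = 2 * k + 1"
    using oddE by blast
  have "\<lceil>real (6 * m + 2 + 2) / 4\<rceil> = int (3 * k + 3)"
    by (rule ceiling_unique) (simp_all add: k field_simps)
  then show ?thesis
    using k by simp
qed

theorem proposition5p7:
  fixes m :: nat
  assumes "m \<ge> 2"
  shows "simple_graph (GV m) (GE m) \<and> cubic (GV m) (GE m) \<and> bridged (GE m)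
           \<and> class2 (GV m) (GE m) \<and> triangle_free (GE m)
         \<and> int (c2 (GV m) (GE m)) - \<lceil>real (card (GV m) + 2) / 4\<rceil> = int (m div 2) - 1"
proof -
  have "int (c2 (GV m) (GE m)) - \<lceil>real (card (GV m) + 2) / 4\<rceil> = int (m div 2) - 1"
    using ceiling_excess by (simp add: c2_G[OF assms] card_GV[OF assms])
  then show ?thesis
    using simple_graph_G cubic_G[OF assms] bridged_G[OF assms] class2_G[OF assms]
      triangle_free_G[OF assms] by blast
qed

end
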